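(* Let $\mathcal P$ be a family of filters over some set $I$. A product $\prod_{j\in J} X_j$ of (nonempty) topological spaces is sequencewise $\mathcal P$-compact if and only if, for every $K\subseteq J$ with $|K|\leq|\mathcal P|$, the subproduct $\prod_{j\in K} X_j$ is sequencewise $\mathcal P$-compact.
   Context: No separation axioms are assumed; all topological spaces are nonempty. If $X$ is a topological space, $(x_i)_{i\in I}$ is an $I$-indexed sequence of elements of $X$ and $F$ is a filter over $I$, a point $x\in X$ is an $F$-limit point of $(x_i)_{i\in I}$ (equivalently, the sequence $F$-converges to $x$) if $\{i\in I\mid x_i\in U\}\in F$ for every open neighborhood $U$ of $x$. If $\mathcal P$ is a family of filters over $I$, a space $X$ is sequencewise $\mathcal P$-compact if for every $I$-indexed sequence of elements of $X$ there is $F\in\mathcal P$ such that the sequence has an $F$-limit point in $X$. *)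

theory Defs
  imports "HOL-Analysis.Analysis"
begin

definition seqwise_compact :: "'i filter set \<Rightarrow> 'a topology \<Rightarrow> bool" where
  "seqwise_compact P X \<longleftrightarrow>
     (\<forall>x :: 'i \<Rightarrow> 'a. (\<forall>i. x i \<in> topspace X) \<longrightarrow> (\<exists>F\<in>P. \<exists>p. limitin X x p F))"

end

theory Submission
  imports Defs
begin

text \<open>A sequence in a product has an \<open>F\<close>-limit point exactly when each of its coordinates has
  one. So sequencewise \<open>\<P>\<close>-compactness passes to subproducts, which are continuous images of the
  product because the factors are nonempty. Conversely, if a sequence has no \<open>F\<close>-limit point for
  any \<open>F \<in> \<P>\<close>, choose for each \<open>F\<close> a coordinate without an \<open>F\<close>-limit; these at most
  \<open>|\<P>|\<close> coordinates form a subproduct in which the projected sequence has no limit point either.\<close>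

lemma seqwise_compactD:
  assumes "seqwise_compact P X" and "\<forall>i. x i \<in> topspace X"
  shows "\<exists>F\<in>P. \<exists>p. limitin X x p F"
  using assms unfolding seqwise_compact_def by blast

lemma seqwise_compact_continuous_image:
  fixes P :: "'i filter set" and Y :: "'b topology"
  assumes "seqwise_compact P X" and "continuous_map X Y f" and "f ` topspace X = topspace Y"
  shows "seqwise_compact P Y"
  unfolding seqwise_compact_def
proof (intro allI impI)
  fix y :: "'i \<Rightarrow> 'b" assume "\<forall>i. y i \<in> topspace Y"
  then have "\<forall>i. \<exists>z\<in>topspace X. f z = y i"
    using assms(3) by (metis image_iff)
  then obtain x where x: "\<And>i. x i \<in> topspace X" and fx: "\<And>i. f (x i) = y i"
    by metis
  then obtain F p where "F \<in> P" and "limitin X x p F"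
    using seqwise_compactD[OF assms(1)] by blast
  have "limitin Y (f \<circ> x) (f p) F"
    using assms(2) \<open>limitin X x p F\<close> by (rule continuous_map_limit)
  moreover have "f \<circ> x = y" using fx by auto
  ultimately show "\<exists>F\<in>P. \<exists>q. limitin Y y q F" using \<open>F \<in> P\<close> by auto
qed

lemma restrict_image_PiE:
  assumes "K \<subseteq> J" and "\<forall>j\<in>J. S j \<noteq> {}"
  shows "(\<lambda>x. restrict x K) ` (\<Pi>\<^sub>E j\<in>J. S j) = (\<Pi>\<^sub>E j\<in>K. S j)"
proof
  show "(\<lambda>x. restrict x K) ` (\<Pi>\<^sub>E j\<in>J. S j) \<subseteq> (\<Pi>\<^sub>E j\<in>K. S j)"
    using assms(1) by (auto simp: PiE_iff)
next
  show "(\<Pi>\<^sub>E j\<in>K. S j) \<subseteq> (\<lambda>x. restrict x K) ` (\<Pi>\<^sub>E j\<in>J. S j)"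
  proof
    fix y assume y: "y \<in> (\<Pi>\<^sub>E j\<in>K. S j)"
    define x where "x = (\<lambda>j\<in>J. if j \<in> K then y j else SOME z. z \<in> S j)"
    have "x \<in> (\<Pi>\<^sub>E j\<in>J. S j)"
      using y assms(2) by (auto simp: x_def PiE_iff some_in_eq)
    moreover have "restrict x K = y"
      using y assms(1) by (auto simp: x_def PiE_iff extensional_def fun_eq_iff)
    ultimately show "y \<in> (\<lambda>x. restrict x K) ` (\<Pi>\<^sub>E j\<in>J. S j)" by force
  qed
qed

lemma seqwise_compact_subproduct:
  assumes "seqwise_compact P (product_topology X J)"
    and "K \<subseteq> J" and "\<forall>j\<in>J. topspace (X j) \<noteq> {}"
  shows "seqwise_compact P (product_topology X K)"
proof (rule seqwise_compact_continuous_image[OF assms(1)])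
  show "continuous_map (product_topology X J) (product_topology X K) (\<lambda>x. restrict x K)"
    using assms(2) by (rule continuous_on_restrict)
  show "(\<lambda>x. restrict x K) ` topspace (product_topology X J) = topspace (product_topology X K)"
    using restrict_image_PiE[OF assms(2), of "topspace \<circ> X"] assms(3)
    by (simp add: topspace_product_topology)
qed

lemma ex_limitin_product_topology_iff:
  assumes "\<forall>i. x i \<in> topspace (product_topology X J)"
  shows "(\<exists>p. limitin (product_topology X J) x p F) \<longleftrightarrow>
         (\<forall>j\<in>J. \<exists>q. limitin (X j) (\<lambda>i. x i j) q F)"
proof
  assume "\<exists>p. limitin (product_topology X J) x p F"
  then show "\<forall>j\<in>J. \<exists>q. limitin (X j) (\<lambda>i. x i j) q F"
    unfolding limitin_componentwise by blast
next
  assume "\<forall>j\<in>J. \<exists>q. limitin (X j) (\<lambda>i. x i j) q F"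
  then obtain q where "\<And>j. j \<in> J \<Longrightarrow> limitin (X j) (\<lambda>i. x i j) (q j) F" by metis
  then have "limitin (product_topology X J) x (restrict q J) F"
    unfolding limitin_componentwise using assms by simp
  then show "\<exists>p. limitin (product_topology X J) x p F" by blast
qed

lemma seqwise_compact_product_if_small_subproducts:
  fixes P :: "'i filter set" and X :: "'j \<Rightarrow> 'a topology"
  assumes small: "\<And>K. K \<subseteq> J \<Longrightarrow> (card_of K, card_of P) \<in> ordLeq \<Longrightarrow>
                      seqwise_compact P (product_topology X K)"
  shows "seqwise_compact P (product_topology X J)"
  unfolding seqwise_compact_def
proof (intro allI impI, rule ccontr)
  fix x :: "'i \<Rightarrow> 'j \<Rightarrow> 'a"
  assume x: "\<forall>i. x i \<in> topspace (product_topology X J)"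
    and "\<not> (\<exists>F\<in>P. \<exists>p. limitin (product_topology X J) x p F)"
  then have "\<forall>F\<in>P. \<exists>j\<in>J. \<forall>q. \<not> limitin (X j) (\<lambda>i. x i j) q F"
    by (auto simp: ex_limitin_product_topology_iff)
  then obtain g where g: "\<And>F. F \<in> P \<Longrightarrow> g F \<in> J"
    and no_limit: "\<And>F q. F \<in> P \<Longrightarrow> \<not> limitin (X (g F)) (\<lambda>i. x i (g F)) q F"
    by metis
  have "seqwise_compact P (product_topology X (g ` P))"
    using g by (intro small card_of_image) auto
  moreover have x_restrict: "\<forall>i. restrict (x i) (g ` P) \<in> topspace (product_topology X (g ` P))"
    using x g by (auto simp: PiE_iff)
  ultimately have "\<exists>F\<in>P. \<exists>p. limitin (product_topology X (g ` P)) (\<lambda>i. restrict (x i) (g ` P)) p F"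
    by (rule seqwise_compactD)
  then obtain F where F: "F \<in> P"
    and "\<exists>p. limitin (product_topology X (g ` P)) (\<lambda>i. restrict (x i) (g ` P)) p F"
    by blast
  then have "\<exists>q. limitin (X (g F)) (\<lambda>i. restrict (x i) (g ` P) (g F)) q F"
    unfolding ex_limitin_product_topology_iff[OF x_restrict] by blast
  then have "\<exists>q. limitin (X (g F)) (\<lambda>i. x i (g F)) q F"
    using F by simp
  with F no_limit show False by blast
qed

theorem theorem2p1:
  fixes P :: "'i filter set"
    and X :: "'j \<Rightarrow> 'a topology"
    and J :: "'j set"
  assumes "\<forall>j\<in>J. topspace (X j) \<noteq> {}"
  shows "seqwise_compact P (product_topology X J) \<longleftrightarrow>
         (\<forall>K. K \<subseteq> J \<and> (card_of K, card_of P) \<in> ordLeq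
               \<longrightarrow> seqwise_compact P (product_topology X K))"
proof (intro iffI allI impI)
  fix K assume "seqwise_compact P (product_topology X J)"
    and "K \<subseteq> J \<and> (card_of K, card_of P) \<in> ordLeq"
  then show "seqwise_compact P (product_topology X K)"
    using seqwise_compact_subproduct assms by blast
next
  assume "\<forall>K. K \<subseteq> J \<and> (card_of K, card_of P) \<in> ordLeq
               \<longrightarrow> seqwise_compact P (product_topology X K)"
  then show "seqwise_compact P (product_topology X J)"
    by (simp add: seqwise_compact_product_if_small_subproducts)
qed

end
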